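(* Consider a pairwise spanner instance on a directed graph $G=(V,E)$ with uniform edge lengths and $k\ge 1$ terminal pairs, with optimal value $\mathsf{OPT}$. Then there exists a junction tree $J$ in $G$ with $D(J)\neq\emptyset$ and density $\rho(J)\le \mathsf{OPT}/\sqrt{k}$.
   Context: Pairwise spanner problem: given a directed graph $G=(V,E)$ with $\ell(e)=1$ for all $e$, terminal pairs $(s_i,t_i)$, $i\in[k]$, and target distances $d_i$ with $d_G(s_i,t_i)\le d_i$, find $F\subseteq E$ of minimum cardinality such that $(V,F)$ contains an $s_i\leadsto t_i$ path with at most $d_i$ edges for every $i$; $\mathsf{OPT}$ is this minimum. A junction tree rooted at $r\in V$ is a subgraph $J$ of $G$ that is the union of an in-arborescence $A^{in}$ rooted at $r$ (every vertex of it has a unique path to $r$ in it) and an out-arborescence $A^{out}$ rooted at $r$. A terminal pair $(s_i,t_i)$ is connected by $J$ if $s_i\in A^{in}$, $t_i\in A^{out}$, and the $s_i\leadsto r$ path in $A^{in}$ plus the $r\leadsto t_i$ path in $A^{out}$ have at most $d_i$ edges in total. $D(J)$ is the set of terminal pairs connected by $J$, and the density of $J$ is $\rho(J)=|E(J)|/|D(J)|$. *)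

theory Defs
  imports Complex_Main
begin

text \<open>All edges have unit length, so the length of a path is its number
of edges.\<close>

definition digraph :: "'a set \<Rightarrow> ('a \<times> 'a) set \<Rightarrow> bool" where
  "digraph V E \<longleftrightarrow> finite V \<and> E \<subseteq> V \<times> V"

definition has_path_le :: "('a \<times> 'a) set \<Rightarrow> 'a \<Rightarrow> 'a \<Rightarrow> nat \<Rightarrow> bool" where
  "has_path_le F u v d \<longleftrightarrow> (\<exists>n\<le>d. (u, v) \<in> F ^^ n)"

definition spanner_feasible ::
  "('a \<times> 'a) set \<Rightarrow> nat \<Rightarrow> (nat \<Rightarrow> 'a) \<Rightarrow> (nat \<Rightarrow> 'a) \<Rightarrow> (nat \<Rightarrow> nat) \<Rightarrow> ('a \<times> 'a) set \<Rightarrow> bool" where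
  "spanner_feasible E k s t d F \<longleftrightarrow> F \<subseteq> E \<and> (\<forall>i<k. has_path_le F (s i) (t i) (d i))"

definition spanner_OPT ::
  "('a \<times> 'a) set \<Rightarrow> nat \<Rightarrow> (nat \<Rightarrow> 'a) \<Rightarrow> (nat \<Rightarrow> 'a) \<Rightarrow> (nat \<Rightarrow> nat) \<Rightarrow> nat" where
  "spanner_OPT E k s t d = Min (card ` {F. spanner_feasible E k s t d F})"

definition verts :: "('a \<times> 'a) set \<Rightarrow> 'a \<Rightarrow> 'a set" where
  "verts A r = {r} \<union> fst ` A \<union> snd ` A"

definition in_arborescence :: "('a \<times> 'a) set \<Rightarrow> ('a \<times> 'a) set \<Rightarrow> 'a \<Rightarrow> bool" where
  "in_arborescence E A r \<longleftrightarrow> A \<subseteq> E \<and> (\<forall>e\<in>A. fst e \<noteq> r) \<and>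
     (\<forall>v \<in> verts A r - {r}. \<exists>!w. (v, w) \<in> A) \<and> (\<forall>v \<in> verts A r. (v, r) \<in> A\<^sup>*)"

definition out_arborescence :: "('a \<times> 'a) set \<Rightarrow> ('a \<times> 'a) set \<Rightarrow> 'a \<Rightarrow> bool" where
  "out_arborescence E A r \<longleftrightarrow> A \<subseteq> E \<and> (\<forall>e\<in>A. snd e \<noteq> r) \<and>
     (\<forall>v \<in> verts A r - {r}. \<exists>!u. (u, v) \<in> A) \<and> (\<forall>v \<in> verts A r. (r, v) \<in> A\<^sup>*)"

definition junction_tree :: "('a \<times> 'a) set \<Rightarrow> 'a \<Rightarrow> ('a \<times> 'a) set \<Rightarrow> ('a \<times> 'a) set \<Rightarrow> bool" where
  "junction_tree E r Ain Aout \<longleftrightarrow> in_arborescence E Ain r \<and> out_arborescence E Aout r"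

text \<open>D(J): indices of terminal pairs connected by J. In an arborescence the path
to/from the root is unique, so its length is the unique n with the relpow membership.\<close>
definition connected_pairs ::
  "nat \<Rightarrow> (nat \<Rightarrow> 'a) \<Rightarrow> (nat \<Rightarrow> 'a) \<Rightarrow> (nat \<Rightarrow> nat) \<Rightarrow> 'a \<Rightarrow> ('a \<times> 'a) set \<Rightarrow> ('a \<times> 'a) set \<Rightarrow> nat set" where
  "connected_pairs k s t d r Ain Aout =
     {i. i < k \<and> s i \<in> verts Ain r \<and> t i \<in> verts Aout r \<and>
         (\<exists>a b. (s i, r) \<in> Ain ^^ a \<and> (r, t i) \<in> Aout ^^ b \<and> a + b \<le> d i)}"

definition density ::
  "nat \<Rightarrow> (nat \<Rightarrow> 'a) \<Rightarrow> (nat \<Rightarrow> 'a) \<Rightarrow> (nat \<Rightarrow> nat) \<Rightarrow> 'a \<Rightarrow> ('a \<times> 'a) set \<Rightarrow> ('a \<times> 'a) set \<Rightarrow> real" where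
  "density k s t d r Ain Aout = real (card (Ain \<union> Aout)) / real (card (connected_pairs k s t d r Ain Aout))"

end

theory Submission
  imports Defs
begin

text \<open>Fix an optimal spanner F and, for each pair i, an s_i-t_i path P_i in F with at
most d_i edges. Any vertex u of F is the root of a junction tree inside F, made of a
shortest-path in-tree and a shortest-path out-tree of F at u, which connects every
pair whose path P_i passes through u. Double counting gives
\<Sum>_e |{i. e \<in> P_i}| = \<Sum>_i |P_i|. So either some edge (u,v) of F lies on at least
\<surd>k of the paths, and the junction tree of F at u has density at most |F|/\<surd>k; or
every edge lies on fewer than \<surd>k paths, hence \<Sum>_i |P_i| < |F|\<surd>k and some P_i has
at most |F|/\<surd>k edges, and the out-tree of P_i at s_i connects pair i.\<close>

lemma converse_relpow: "((R :: ('a \<times> 'a) set)\<inverse>) ^^ n = (R ^^ n)\<inverse>"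
proof (induction n)
  case (Suc n)
  have "(R\<inverse>) ^^ Suc n = (R O R ^^ n)\<inverse>" by (simp add: Suc converse_relcomp)
  then show ?case by (simp add: relpow_commute)
qed simp

lemma verts_converse [simp]: "verts (A\<inverse>) r = verts A r"
  unfolding verts_def by force

lemma in_arborescence_iff_converse: "in_arborescence E A r \<longleftrightarrow> out_arborescence (E\<inverse>) (A\<inverse>) r"
proof -
  have "(\<forall>e\<in>A\<inverse>. snd e \<noteq> r) \<longleftrightarrow> (\<forall>e\<in>A. fst e \<noteq> r)"
    by (simp add: Ball_def split_paired_All) blast
  then show ?thesis
    unfolding in_arborescence_def out_arborescence_def by (simp add: rtrancl_converse)
qed

lemma in_arborescence_mono: "in_arborescence F A r \<Longrightarrow> F \<subseteq> E \<Longrightarrow> in_arborescence E A r"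
  unfolding in_arborescence_def by blast

lemma out_arborescence_mono: "out_arborescence F A r \<Longrightarrow> F \<subseteq> E \<Longrightarrow> out_arborescence E A r"
  unfolding out_arborescence_def by blast

definition dist_from :: "('a \<times> 'a) set \<Rightarrow> 'a \<Rightarrow> 'a \<Rightarrow> nat" where
  "dist_from F r v = (LEAST n. (r, v) \<in> F ^^ n)"

lemma relpow_dist_from: "(r, v) \<in> F ^^ n \<Longrightarrow> (r, v) \<in> F ^^ dist_from F r v"
  unfolding dist_from_def by (rule LeastI)

lemma dist_from_le: "(r, v) \<in> F ^^ n \<Longrightarrow> dist_from F r v \<le> n"
  unfolding dist_from_def by (rule Least_le)

lemma dist_from_predecessor:
  assumes "(r, v) \<in> F ^^ n" "v \<noteq> r"
  shows "\<exists>u. (u, v) \<in> F \<and> (r, u) \<in> F ^^ dist_from F r u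
           \<and> Suc (dist_from F r u) = dist_from F r v"
proof -
  have v: "(r, v) \<in> F ^^ dist_from F r v" using assms(1) by (rule relpow_dist_from)
  with assms(2) obtain m where m: "dist_from F r v = Suc m" by (cases "dist_from F r v") auto
  with v obtain u where u: "(r, u) \<in> F ^^ m" "(u, v) \<in> F" by (metis relpow_Suc_E)
  have "dist_from F r v \<le> Suc (dist_from F r u)"
    using relpow_Suc_I[OF relpow_dist_from[OF u(1)] u(2)] by (rule dist_from_le)
  with m dist_from_le[OF u(1)] have "Suc (dist_from F r u) = dist_from F r v" by linarith
  with u(2) relpow_dist_from[OF u(1)] show ?thesis by blast
qed

definition out_shortest_path_tree :: "('a \<times> 'a) set \<Rightarrow> 'a \<Rightarrow> ('a \<times> 'a) set \<Rightarrow> bool" where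
  "out_shortest_path_tree F r A \<longleftrightarrow> out_arborescence F A r \<and>
     (\<forall>v n. (r, v) \<in> F ^^ n \<longrightarrow> v \<in> verts A r \<and> (\<exists>m\<le>n. (r, v) \<in> A ^^ m))"

definition in_shortest_path_tree :: "('a \<times> 'a) set \<Rightarrow> 'a \<Rightarrow> ('a \<times> 'a) set \<Rightarrow> bool" where
  "in_shortest_path_tree F r A \<longleftrightarrow> in_arborescence F A r \<and>
     (\<forall>v n. (v, r) \<in> F ^^ n \<longrightarrow> v \<in> verts A r \<and> (\<exists>m\<le>n. (v, r) \<in> A ^^ m))"

lemma in_shortest_path_tree_iff_converse:
  "in_shortest_path_tree F r A \<longleftrightarrow> out_shortest_path_tree (F\<inverse>) r (A\<inverse>)"
  unfolding in_shortest_path_tree_def out_shortest_path_tree_def in_arborescence_iff_converse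
  by (simp add: converse_relpow)

lemma out_shortest_path_tree_exists: "\<exists>A. out_shortest_path_tree F r A"
proof -
  define R where "R = {v. \<exists>n. (r, v) \<in> F ^^ n}"
  let ?dist = "dist_from F r"
  define p where
    "p v = (SOME u. (u, v) \<in> F \<and> (r, u) \<in> F ^^ ?dist u \<and> Suc (?dist u) = ?dist v)" for v
  have p: "(p v, v) \<in> F" "p v \<in> R" "Suc (?dist (p v)) = ?dist v"
    if "v \<in> R" "v \<noteq> r" for v
  proof -
    from that obtain n where "(r, v) \<in> F ^^ n" unfolding R_def by blast
    from dist_from_predecessor[OF this that(2)]
    have "(p v, v) \<in> F \<and> (r, p v) \<in> F ^^ ?dist (p v) \<and> Suc (?dist (p v)) = ?dist v"
      unfolding p_def by (rule someI_ex)
    then show "(p v, v) \<in> F" "p v \<in> R" "Suc (?dist (p v)) = ?dist v"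
      unfolding R_def by blast+
  qed
  define A where "A = {(p v, v) | v. v \<in> R \<and> v \<noteq> r}"
  have r_in_R: "r \<in> R" unfolding R_def using relpow_0_I[of r F] by blast
  have A_edge: "(p v, v) \<in> A" if "v \<in> R" "v \<noteq> r" for v
    unfolding A_def using that by blast
  have "A \<subseteq> R \<times> R" unfolding A_def using p(2) by auto
  then have verts_A: "verts A r = R"
    unfolding verts_def using r_in_R A_edge by (auto simp: image_iff) force
  have A_reaches: "(r, v) \<in> A ^^ ?dist v" if "v \<in> R" for v
    using that
  proof (induction "?dist v" arbitrary: v)
    case 0
    then have "v = r" using relpow_dist_from unfolding R_def by fastforce
    with "0.hyps" show ?case by (metis relpow_0_I)
  next
    case (Suc n v)
    have "v \<noteq> r" using Suc.hyps(2) dist_from_le[OF relpow_0_I[of r F]] by auto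
    with Suc.prems have "p v \<in> R" "Suc (?dist (p v)) = ?dist v" "(p v, v) \<in> A"
      by (simp_all add: p A_edge)
    with Suc.hyps show ?case by (metis Suc_inject relpow_Suc_I)
  qed
  have "out_arborescence F A r"
    unfolding out_arborescence_def
  proof (intro conjI ballI)
    show "A \<subseteq> F" unfolding A_def using p(1) by auto
    show "snd e \<noteq> r" if "e \<in> A" for e using that unfolding A_def by auto
    show "\<exists>!u. (u, v) \<in> A" if "v \<in> verts A r - {r}" for v
    proof
      show "(p v, v) \<in> A" using that A_edge unfolding verts_A by blast
      show "u = p v" if "(u, v) \<in> A" for u using that unfolding A_def by blast
    qed
    show "(r, v) \<in> A\<^sup>*" if "v \<in> verts A r" for v
      using that A_reaches relpow_imp_rtrancl unfolding verts_A by metis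
  qed
  moreover have "v \<in> verts A r \<and> (\<exists>m\<le>n. (r, v) \<in> A ^^ m)" if "(r, v) \<in> F ^^ n" for v n
  proof -
    have "v \<in> R" using that unfolding R_def by blast
    then show ?thesis using A_reaches dist_from_le[OF that] unfolding verts_A by blast
  qed
  ultimately show ?thesis unfolding out_shortest_path_tree_def by blast
qed

lemma in_shortest_path_tree_exists: "\<exists>A. in_shortest_path_tree F r A"
  using out_shortest_path_tree_exists[of "F\<inverse>" r]
  by (metis converse_converse in_shortest_path_tree_iff_converse)

definition pairs_through ::
  "('a \<times> 'a) set \<Rightarrow> nat \<Rightarrow> (nat \<Rightarrow> 'a) \<Rightarrow> (nat \<Rightarrow> 'a) \<Rightarrow> (nat \<Rightarrow> nat) \<Rightarrow> 'a \<Rightarrow> nat set" where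
  "pairs_through F k s t d r =
     {i. i < k \<and> (\<exists>a b. (s i, r) \<in> F ^^ a \<and> (r, t i) \<in> F ^^ b \<and> a + b \<le> d i)}"

lemma junction_tree_in_subgraph:
  assumes "F \<subseteq> E"
  obtains Ain Aout where "junction_tree E r Ain Aout" "Ain \<union> Aout \<subseteq> F"
    "pairs_through F k s t d r \<subseteq> connected_pairs k s t d r Ain Aout"
proof -
  obtain Ain Aout
    where Ain: "in_shortest_path_tree F r Ain" and Aout: "out_shortest_path_tree F r Aout"
    using in_shortest_path_tree_exists out_shortest_path_tree_exists by metis
  have "junction_tree E r Ain Aout" "Ain \<union> Aout \<subseteq> F"
    using Ain Aout assms in_arborescence_mono out_arborescence_mono
    unfolding junction_tree_def in_shortest_path_tree_def out_shortest_path_tree_def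
      in_arborescence_def out_arborescence_def by blast+
  moreover have "i \<in> connected_pairs k s t d r Ain Aout"
    if i: "i < k" and path: "(s i, r) \<in> F ^^ a" "(r, t i) \<in> F ^^ b" "a + b \<le> d i" for i a b
  proof -
    obtain a' b' where "a' \<le> a" "(s i, r) \<in> Ain ^^ a'" "s i \<in> verts Ain r"
      and "b' \<le> b" "(r, t i) \<in> Aout ^^ b'" "t i \<in> verts Aout r"
      using Ain Aout path(1,2)
      unfolding in_shortest_path_tree_def out_shortest_path_tree_def by blast
    moreover have "a' + b' \<le> d i" using calculation(1,4) path(3) by linarith
    ultimately show ?thesis using i unfolding connected_pairs_def by blast
  qed
  ultimately show ?thesis using that unfolding pairs_through_def by blast
qed

lemma density_le_card_div:
  assumes "finite F" "Ain \<union> Aout \<subseteq> F" "S \<subseteq> connected_pairs k s t d r Ain Aout"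
    and "0 < c" "c \<le> real (card S)"
  shows "connected_pairs k s t d r Ain Aout \<noteq> {}" "density k s t d r Ain Aout \<le> real (card F) / c"
proof -
  have "finite (connected_pairs k s t d r Ain Aout)" unfolding connected_pairs_def by simp
  then have "c \<le> real (card (connected_pairs k s t d r Ain Aout))"
    using assms(3,5) card_mono[of _ S] by (meson of_nat_le_iff order_trans)
  moreover have "card (Ain \<union> Aout) \<le> card F" using assms(1,2) by (rule card_mono)
  ultimately show "connected_pairs k s t d r Ain Aout \<noteq> {}"
    "density k s t d r Ain Aout \<le> real (card F) / c"
    using assms(4) unfolding density_def by (auto intro: frac_le)
qed

lemma junction_tree_density_le:
  assumes "F \<subseteq> E" "finite F" "S \<subseteq> pairs_through F k s t d r" "0 < c" "c \<le> real (card S)"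
  shows "\<exists>Ain Aout. junction_tree E r Ain Aout \<and> connected_pairs k s t d r Ain Aout \<noteq> {}
           \<and> density k s t d r Ain Aout \<le> real (card F) / c"
proof -
  obtain Ain Aout where jt: "junction_tree E r Ain Aout" and sub: "Ain \<union> Aout \<subseteq> F"
    and served: "pairs_through F k s t d r \<subseteq> connected_pairs k s t d r Ain Aout"
    using junction_tree_in_subgraph[OF assms(1)] .
  have "S \<subseteq> connected_pairs k s t d r Ain Aout" using assms(3) served by (rule order_trans)
  with jt density_le_card_div[OF assms(2) sub _ assms(4,5)] show ?thesis by blast
qed

definition walk_edges :: "(nat \<Rightarrow> 'a) \<Rightarrow> nat \<Rightarrow> ('a \<times> 'a) set" where
  "walk_edges w n = (\<lambda>j. (w j, w (Suc j))) ` {..<n}"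

lemma relpow_iff_walk: "(x, y) \<in> F ^^ n \<longleftrightarrow> (\<exists>w. w 0 = x \<and> w n = y \<and> walk_edges w n \<subseteq> F)"
  unfolding relpow_fun_conv walk_edges_def by (simp add: image_subset_iff Ball_def)

lemma walk_in_walk_edges: "(w 0, w n) \<in> walk_edges w n ^^ n"
  using relpow_iff_walk[where F = "walk_edges w n"] by blast

lemma finite_walk_edges [simp]: "finite (walk_edges w n)"
  unfolding walk_edges_def by simp

lemma walk_through_edge:
  assumes "walk_edges w n \<subseteq> F" "(u, v) \<in> walk_edges w n"
  shows "\<exists>a b. (w 0, u) \<in> F ^^ a \<and> (u, w n) \<in> F ^^ b \<and> a + b = n"
proof -
  obtain j where j: "j < n" "u = w j" using assms(2) unfolding walk_edges_def by auto
  have "(w 0, w j) \<in> F ^^ j"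
    using assms(1) j(1) unfolding relpow_iff_walk walk_edges_def by (intro exI[of _ w]) auto
  moreover have "(w j, w n) \<in> F ^^ (n - j)"
    using assms(1) j(1) unfolding relpow_iff_walk walk_edges_def
    by (intro exI[of _ "\<lambda>x. w (j + x)"]) auto
  ultimately show ?thesis using j by (intro exI) auto
qed

definition short_walk :: "('a \<times> 'a) set \<Rightarrow> 'a \<Rightarrow> 'a \<Rightarrow> nat \<Rightarrow> nat \<Rightarrow> (nat \<Rightarrow> 'a) \<Rightarrow> bool" where
  "short_walk F x y l n w \<longleftrightarrow> n \<le> l \<and> w 0 = x \<and> w n = y \<and> walk_edges w n \<subseteq> F"

lemma pairs_through_if_on_walk:
  assumes "i < k" "short_walk F (s i) (t i) (d i) n w" "(u, v) \<in> walk_edges w n"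
  shows "i \<in> pairs_through F k s t d u"
proof -
  obtain a b where "(s i, u) \<in> F ^^ a" "(u, t i) \<in> F ^^ b" "a + b = n"
    using assms(2,3) walk_through_edge unfolding short_walk_def by metis
  moreover have "n \<le> d i" using assms(2) unfolding short_walk_def by simp
  ultimately show ?thesis using assms(1) unfolding pairs_through_def by force
qed

lemma pair_through_walk_start:
  assumes "i < k" "short_walk F (s i) (t i) (d i) n w"
  shows "i \<in> pairs_through (walk_edges w n) k s t d (s i)"
proof -
  have "(s i, s i) \<in> walk_edges w n ^^ 0" "(s i, t i) \<in> walk_edges w n ^^ n" "0 + n \<le> d i"
    using assms(2) walk_in_walk_edges[of w n] unfolding short_walk_def by auto
  with assms(1) show ?thesis unfolding pairs_through_def by blast
qed

lemma junction_tree_at_heavy_edge: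
  assumes "F \<subseteq> E" "finite F" "\<And>i. i < k \<Longrightarrow> short_walk F (s i) (t i) (d i) (n i) (w i)"
    and "0 < c" "c \<le> real (card {i. i < k \<and> (u, v) \<in> walk_edges (w i) (n i)})"
  shows "\<exists>Ain Aout. junction_tree E u Ain Aout \<and> connected_pairs k s t d u Ain Aout \<noteq> {}
           \<and> density k s t d u Ain Aout \<le> real (card F) / c"
proof -
  have "{i. i < k \<and> (u, v) \<in> walk_edges (w i) (n i)} \<subseteq> pairs_through F k s t d u"
  proof
    fix i assume "i \<in> {i. i < k \<and> (u, v) \<in> walk_edges (w i) (n i)}"
    then have i: "i < k" and uv: "(u, v) \<in> walk_edges (w i) (n i)" by auto
    from uv show "i \<in> pairs_through F k s t d u"
      by (rule pairs_through_if_on_walk[where s = s and t = t and d = d, OF i assms(3)[OF i]])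
  qed
  then show ?thesis by (rule junction_tree_density_le[OF assms(1,2) _ assms(4,5)])
qed

lemma junction_tree_along_short_walk:
  assumes "F \<subseteq> E" "i < k" "short_walk F (s i) (t i) (d i) n w"
  shows "\<exists>Ain Aout. junction_tree E (s i) Ain Aout \<and> connected_pairs k s t d (s i) Ain Aout \<noteq> {}
           \<and> density k s t d (s i) Ain Aout \<le> real (card (walk_edges w n))"
proof -
  have "walk_edges w n \<subseteq> E" using assms(1,3) unfolding short_walk_def by blast
  moreover have "{i} \<subseteq> pairs_through (walk_edges w n) k s t d (s i)"
    using pair_through_walk_start[where s = s and t = t and d = d, OF assms(2,3)] by blast
  moreover have "(1 :: real) \<le> real (card {i})" by simp
  ultimately have "\<exists>Ain Aout. junction_tree E (s i) Ain Aout \<and> connected_pairs k s t d (s i) Ain Aout \<noteq> {}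
           \<and> density k s t d (s i) Ain Aout \<le> real (card (walk_edges w n)) / 1"
    by (rule junction_tree_density_le[OF _ finite_walk_edges _ zero_less_one])
  then show ?thesis by simp
qed

lemma card_conv_sum_indicator:
  fixes k :: nat
  shows "card {i. i < k \<and> e \<in> P i} = (\<Sum>i<k. if e \<in> P i then 1 else 0)"
proof -
  have "(\<Sum>i<k. if e \<in> P i then 1 else 0) = (\<Sum>i \<in> {i \<in> {..<k}. e \<in> P i}. 1 :: nat)"
    by (rule sum.inter_filter[symmetric]) simp
  also have "{i \<in> {..<k}. e \<in> P i} = {i. i < k \<and> e \<in> P i}" by auto
  finally show ?thesis by simp
qed

lemma sum_card_incidences:
  fixes k :: nat
  assumes "finite F" "\<And>i. i < k \<Longrightarrow> P i \<subseteq> F"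
  shows "(\<Sum>e\<in>F. card {i. i < k \<and> e \<in> P i}) = (\<Sum>i<k. card (P i))"
proof -
  have "(\<Sum>e\<in>F. card {i. i < k \<and> e \<in> P i}) = (\<Sum>i<k. \<Sum>e\<in>F. if e \<in> P i then 1 else 0)"
    unfolding card_conv_sum_indicator by (rule sum.swap)
  also have "\<dots> = (\<Sum>i<k. card (P i))"
  proof (rule sum.cong)
    fix i assume "i \<in> {..<k}"
    then have "{e \<in> F. e \<in> P i} = P i" using assms(2) by auto
    then show "(\<Sum>e\<in>F. if e \<in> P i then 1 else 0) = card (P i)"
      using sum.inter_filter[OF assms(1), of "\<lambda>_. 1 :: nat" "\<lambda>e. e \<in> P i"] by simp
  qed simp
  finally show ?thesis .
qed

lemma heavy_element_or_light_index:
  fixes c :: "'e \<Rightarrow> real" and p :: "nat \<Rightarrow> real"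
  assumes "finite F" "k \<ge> 1" "(\<Sum>e\<in>F. c e) = (\<Sum>i<k. p i)"
  shows "(\<exists>e\<in>F. sqrt k \<le> c e) \<or> (\<exists>i<k. p i \<le> card F / sqrt k)"
proof (rule ccontr)
  assume "\<not> ?thesis"
  then have heavy: "\<forall>e\<in>F. c e \<le> sqrt k" and light: "\<forall>i<k. card F / sqrt k < p i"
    by (auto simp: not_le)
  have "(\<Sum>e\<in>F. c e) \<le> (\<Sum>e\<in>F. sqrt k)" using heavy by (intro sum_mono) auto
  also have "\<dots> = card F * (real k / sqrt k)" by (simp add: real_div_sqrt)
  also have "\<dots> = (\<Sum>i<k. card F / sqrt k)" by simp
  also have "\<dots> < (\<Sum>i<k. p i)"
    using light assms(2) by (intro sum_strict_mono) (auto simp: lessThan_empty_iff)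
  finally show False using assms(3) by simp
qed

lemma digraph_finite_edges: "digraph V E \<Longrightarrow> finite E"
  unfolding digraph_def by (meson finite_SigmaI finite_subset)

lemma spanner_OPT_attained:
  assumes "digraph V E" "\<forall>i<k. has_path_le E (s i) (t i) (d i)"
  obtains F where "spanner_feasible E k s t d F" "card F = spanner_OPT E k s t d"
proof -
  let ?Fs = "{F. spanner_feasible E k s t d F}"
  have "?Fs \<subseteq> Pow E" unfolding spanner_feasible_def by blast
  then have "finite ?Fs" using digraph_finite_edges[OF assms(1)] finite_subset by blast
  moreover have "E \<in> ?Fs" using assms(2) unfolding spanner_feasible_def by simp
  ultimately have "spanner_OPT E k s t d \<in> card ` ?Fs"
    unfolding spanner_OPT_def by (intro Min_in) auto
  then obtain F where "spanner_feasible E k s t d F" "card F = spanner_OPT E k s t d" by auto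
  then show ?thesis by (rule that)
qed

lemma spanner_feasible_short_walks:
  assumes "spanner_feasible E k s t d F"
  obtains n w where "\<And>i. i < k \<Longrightarrow> short_walk F (s i) (t i) (d i) (n i) (w i)"
proof -
  have "\<forall>i. \<exists>n. i < k \<longrightarrow> n \<le> d i \<and> (s i, t i) \<in> F ^^ n"
    using assms unfolding spanner_feasible_def has_path_le_def by blast
  then obtain n where n: "\<And>i. i < k \<Longrightarrow> n i \<le> d i \<and> (s i, t i) \<in> F ^^ n i" by metis
  then have "\<forall>i. \<exists>w. i < k \<longrightarrow> w 0 = s i \<and> w (n i) = t i \<and> walk_edges w (n i) \<subseteq> F"
    unfolding relpow_iff_walk by blast
  then obtain w
    where w: "\<And>i. i < k \<Longrightarrow> w i 0 = s i \<and> w i (n i) = t i \<and> walk_edges (w i) (n i) \<subseteq> F"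
    by metis
  have "short_walk F (s i) (t i) (d i) (n i) (w i)" if "i < k" for i
    using n[OF that] w[OF that] unfolding short_walk_def by blast
  then show ?thesis by (rule that)
qed

theorem lemma4p3:
  fixes V :: "'a set" and E :: "('a \<times> 'a) set"
    and k :: nat and s t :: "nat \<Rightarrow> 'a" and d :: "nat \<Rightarrow> nat"
  assumes "digraph V E"
    and "k \<ge> 1"
    and "\<forall>i<k. s i \<in> V \<and> t i \<in> V"
    and "\<forall>i<k. has_path_le E (s i) (t i) (d i)"
  shows "\<exists>r Ain Aout. r \<in> V \<and> junction_tree E r Ain Aout
            \<and> connected_pairs k s t d r Ain Aout \<noteq> {}
            \<and> density k s t d r Ain Aout \<le> real (spanner_OPT E k s t d) / sqrt (real k)"
proof -
  obtain F where feasible: "spanner_feasible E k s t d F" and opt: "card F = spanner_OPT E k s t d"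
    using spanner_OPT_attained[OF assms(1,4)] .
  then have FE: "F \<subseteq> E" unfolding spanner_feasible_def by simp
  then have finF: "finite F" using digraph_finite_edges[OF assms(1)] by (rule finite_subset)
  obtain n w where walk: "\<And>i. i < k \<Longrightarrow> short_walk F (s i) (t i) (d i) (n i) (w i)"
    using spanner_feasible_short_walks[OF feasible] by blast
  define P where "P i = walk_edges (w i) (n i)" for i
  let ?load = "\<lambda>e. card {i. i < k \<and> e \<in> P i}"
  have "(\<Sum>e\<in>F. ?load e) = (\<Sum>i<k. card (P i))"
    using finF walk unfolding P_def short_walk_def by (intro sum_card_incidences) auto
  then have "(\<Sum>e\<in>F. real (?load e)) = (\<Sum>i<k. real (card (P i)))"
    by (simp flip: of_nat_sum)
  with heavy_element_or_light_index[OF finF assms(2)]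
  consider (heavy) u v where "(u, v) \<in> F" "sqrt k \<le> real (?load (u, v))"
    | (light) i where "i < k" "real (card (P i)) \<le> card F / sqrt k"
    by fastforce
  then show ?thesis
  proof cases
    case heavy
    have "0 < sqrt k" using assms(2) by simp
    from junction_tree_at_heavy_edge[where s = s and t = t and d = d, OF FE finF walk this
        heavy(2)[unfolded P_def]]
    obtain Ain Aout where "junction_tree E u Ain Aout" "connected_pairs k s t d u Ain Aout \<noteq> {}"
      "density k s t d u Ain Aout \<le> card F / sqrt k"
      by blast
    moreover have "u \<in> V" using heavy(1) FE assms(1) unfolding digraph_def by auto
    ultimately show ?thesis unfolding opt by blast
  next
    case light
    from junction_tree_along_short_walk[where s = s and t = t and d = d,
        OF FE light(1) walk[OF light(1)]]
    obtain Ain Aout where "junction_tree E (s i) Ain Aout"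
      "connected_pairs k s t d (s i) Ain Aout \<noteq> {}" "density k s t d (s i) Ain Aout \<le> card (P i)"
      unfolding P_def by blast
    moreover have "s i \<in> V" using assms(3) light(1) by blast
    ultimately show ?thesis using light(2) unfolding opt by (meson order_trans)
  qed
qed

end
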